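(* The full subcategory $\mathbf{Eph}_n$ of ephemeral modules is a Serre subcategory of the category $\mathbf{Pers}_n$ of $n$-parameter persistence modules: for every short exact sequence $0\to V'\to V\to V''\to0$ in $\mathbf{Pers}_n$, the module $V$ is ephemeral if and only if both $V'$ and $V''$ are ephemeral.
   Context: Fix a field $\mathbb{k}$. $\mathbf{Pers}_n$ is the (Abelian) category of functors $V:\mathbf{R}^n\to\mathbf{Vect}_{\mathbb{k}}$, where $\mathbf{R}^n$ carries the componentwise order; $V_{s,t}$ denotes structure maps. A module $V$ is ephemeral if $V_{s-\varepsilon,s}=0$ for all $s\in\mathbb{R}^n$ and $\varepsilon>0$, where $s-\varepsilon$ subtracts $\varepsilon$ from each coordinate. *)

theory Defs
  imports "HOL-Analysis.Analysis"
begin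

definition cw_le :: "real^'n \<Rightarrow> real^'n \<Rightarrow> bool" where
  "cw_le s t \<longleftrightarrow> (\<forall>i. s $ i \<le> t $ i)"

definition shift_down :: "real^'n \<Rightarrow> real \<Rightarrow> real^'n" where
  "shift_down s eps = (\<chi> i. s $ i - eps)"

definition lin_on ::
  "('k \<Rightarrow> 'a::ab_group_add \<Rightarrow> 'a) \<Rightarrow> ('k \<Rightarrow> 'b \<Rightarrow> 'b) \<Rightarrow> 'a set \<Rightarrow> 'b set \<Rightarrow> ('a \<Rightarrow> 'b::ab_group_add) \<Rightarrow> bool" where
  "lin_on sa sb A B g \<longleftrightarrow>
     (\<forall>x\<in>A. g x \<in> B) \<and>
     (\<forall>x\<in>A. \<forall>y\<in>A. g (x + y) = g x + g y) \<and>
     (\<forall>c. \<forall>x\<in>A. g (sa c x) = sb c (g x))"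

text \<open>Each V_s is a k-vector space, realised as a subspace
  of an ambient k-vector space 'v; F s t is the structure map V_{s,t}.\<close>
definition pers_module ::
  "('k::field \<Rightarrow> 'v::ab_group_add \<Rightarrow> 'v) \<Rightarrow> (real^'n \<Rightarrow> 'v set)
     \<Rightarrow> (real^'n \<Rightarrow> real^'n \<Rightarrow> 'v \<Rightarrow> 'v) \<Rightarrow> bool" where
  "pers_module sc V F \<longleftrightarrow>
     vector_space sc \<and>
     (\<forall>s. module.subspace sc (V s)) \<and>
     (\<forall>s t. cw_le s t \<longrightarrow> lin_on sc sc (V s) (V t) (F s t)) \<and>
     (\<forall>s. \<forall>x\<in>V s. F s s x = x) \<and>
     (\<forall>s t u. cw_le s t \<longrightarrow> cw_le t u \<longrightarrow> (\<forall>x\<in>V s. F t u (F s t x) = F s u x))"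

definition pers_hom ::
  "('k::field \<Rightarrow> 'a::ab_group_add \<Rightarrow> 'a) \<Rightarrow> (real^'n \<Rightarrow> 'a set) \<Rightarrow> (real^'n \<Rightarrow> real^'n \<Rightarrow> 'a \<Rightarrow> 'a)
   \<Rightarrow> ('k \<Rightarrow> 'b::ab_group_add \<Rightarrow> 'b) \<Rightarrow> (real^'n \<Rightarrow> 'b set) \<Rightarrow> (real^'n \<Rightarrow> real^'n \<Rightarrow> 'b \<Rightarrow> 'b)
   \<Rightarrow> (real^'n \<Rightarrow> 'a \<Rightarrow> 'b) \<Rightarrow> bool" where
  "pers_hom sa V F sb W G \<phi> \<longleftrightarrow>
     pers_module sa V F \<and> pers_module sb W G \<and>
     (\<forall>s. lin_on sa sb (V s) (W s) (\<phi> s)) \<and>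
     (\<forall>s t. cw_le s t \<longrightarrow> (\<forall>x\<in>V s. \<phi> t (F s t x) = G s t (\<phi> s x)))"

text \<open>Short exact sequence 0 \<rightarrow> V' \<rightarrow> V \<rightarrow> V'' \<rightarrow> 0 in Pers_n
  (exactness in a functor category into Vect_k is pointwise).\<close>
definition short_exact ::
  "('k::field \<Rightarrow> 'a::ab_group_add \<Rightarrow> 'a) \<Rightarrow> (real^'n \<Rightarrow> 'a set) \<Rightarrow> (real^'n \<Rightarrow> real^'n \<Rightarrow> 'a \<Rightarrow> 'a)
   \<Rightarrow> ('k \<Rightarrow> 'b::ab_group_add \<Rightarrow> 'b) \<Rightarrow> (real^'n \<Rightarrow> 'b set) \<Rightarrow> (real^'n \<Rightarrow> real^'n \<Rightarrow> 'b \<Rightarrow> 'b)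
   \<Rightarrow> ('k \<Rightarrow> 'c::ab_group_add \<Rightarrow> 'c) \<Rightarrow> (real^'n \<Rightarrow> 'c set) \<Rightarrow> (real^'n \<Rightarrow> real^'n \<Rightarrow> 'c \<Rightarrow> 'c)
   \<Rightarrow> (real^'n \<Rightarrow> 'a \<Rightarrow> 'b) \<Rightarrow> (real^'n \<Rightarrow> 'b \<Rightarrow> 'c) \<Rightarrow> bool" where
  "short_exact sa V1 F1 sb V F sc V2 F2 \<phi> \<psi> \<longleftrightarrow>
     pers_hom sa V1 F1 sb V F \<phi> \<and> pers_hom sb V F sc V2 F2 \<psi> \<and>
     (\<forall>s. inj_on (\<phi> s) (V1 s)) \<and>
     (\<forall>s. \<phi> s ` V1 s = {x \<in> V s. \<psi> s x = 0}) \<and>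
     (\<forall>s. \<psi> s ` V s = V2 s)"

definition ephemeral :: "(real^'n \<Rightarrow> 'v set) \<Rightarrow> (real^'n \<Rightarrow> real^'n \<Rightarrow> 'v \<Rightarrow> 'v::zero) \<Rightarrow> bool" where
  "ephemeral V F \<longleftrightarrow> (\<forall>s eps. eps > 0 \<longrightarrow> (\<forall>x\<in>V (shift_down s eps). F (shift_down s eps) s x = 0))"

end

theory Submission
  imports Defs
begin

text \<open>Submodules and quotients of an ephemeral module are ephemeral by naturality of the
  inclusion, resp. the projection. For an extension \<open>0 \<rightarrow> V' \<rightarrow> V \<rightarrow> V'' \<rightarrow> 0\<close> of ephemeral
  modules, factor the structure map of \<open>V\<close> from \<open>s - \<epsilon>\<close> to \<open>s\<close> through \<open>s - \<epsilon>/2\<close>: there an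
  element is killed by \<open>\<psi>\<close> (as \<open>V''\<close> is ephemeral), hence lies in the image of \<open>V'\<close>, which is
  ephemeral and so dies on the remaining way to \<open>s\<close>.\<close>

lemma cw_le_shift_down: "eps \<ge> 0 \<Longrightarrow> cw_le (shift_down s eps) s"
  by (simp add: cw_le_def shift_down_def)

lemma shift_down_shift_down: "shift_down (shift_down s a) b = shift_down s (a + b)"
  by (simp add: shift_down_def vec_eq_iff)

lemma ephemeralI:
  assumes "\<And>s eps x. eps > 0 \<Longrightarrow> x \<in> V (shift_down s eps) \<Longrightarrow> F (shift_down s eps) s x = 0"
  shows "ephemeral V F"
  using assms unfolding ephemeral_def by blast

lemma ephemeralD:
  "ephemeral V F \<Longrightarrow> eps > 0 \<Longrightarrow> x \<in> V (shift_down s eps) \<Longrightarrow> F (shift_down s eps) s x = 0"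
  unfolding ephemeral_def by blast

lemma lin_on_zero:
  fixes g :: "'a::ab_group_add \<Rightarrow> 'b::ab_group_add"
  assumes "lin_on sa sb A B g" "0 \<in> A"
  shows "g 0 = 0"
proof -
  have "g (0 + 0) = g 0 + g 0" using assms unfolding lin_on_def by blast
  then show ?thesis by simp
qed

lemma pers_module_zero:
  assumes "pers_module sc V F"
  shows "0 \<in> V s"
proof -
  interpret vector_space sc using assms unfolding pers_module_def by blast
  show ?thesis using assms unfolding pers_module_def by (blast intro: subspace_0)
qed

lemma pers_module_map_in:
  "pers_module sc V F \<Longrightarrow> cw_le s t \<Longrightarrow> x \<in> V s \<Longrightarrow> F s t x \<in> V t"
  unfolding pers_module_def lin_on_def by blast

lemma pers_module_comp:
  "pers_module sc V F \<Longrightarrow> cw_le s t \<Longrightarrow> cw_le t u \<Longrightarrow> x \<in> V s \<Longrightarrow> F t u (F s t x) = F s u x"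
  unfolding pers_module_def by blast

lemma pers_hom_map_in: "pers_hom sa V F sb W G \<phi> \<Longrightarrow> x \<in> V s \<Longrightarrow> \<phi> s x \<in> W s"
  unfolding pers_hom_def lin_on_def by blast

lemma pers_hom_zero: "pers_hom sa V F sb W G \<phi> \<Longrightarrow> \<phi> s 0 = 0"
  unfolding pers_hom_def by (metis lin_on_zero pers_module_zero)

lemma pers_hom_natural:
  "pers_hom sa V F sb W G \<phi> \<Longrightarrow> cw_le s t \<Longrightarrow> x \<in> V s \<Longrightarrow> \<phi> t (F s t x) = G s t (\<phi> s x)"
  unfolding pers_hom_def by blast

lemma ephemeral_if_inj_hom:
  assumes hom: "pers_hom sa V1 F1 sb V F \<phi>"
    and inj: "\<And>s. inj_on (\<phi> s) (V1 s)"
    and eph: "ephemeral V F"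
  shows "ephemeral V1 F1"
proof (rule ephemeralI)
  have V1: "pers_module sa V1 F1" using hom unfolding pers_hom_def by blast
  fix s eps x
  assume eps: "eps > 0" and x: "x \<in> V1 (shift_down s eps)"
  have le: "cw_le (shift_down s eps) s" using eps by (simp add: cw_le_shift_down)
  have "\<phi> s (F1 (shift_down s eps) s x) = F (shift_down s eps) s (\<phi> (shift_down s eps) x)"
    using pers_hom_natural[OF hom le x] .
  also have "\<dots> = \<phi> s 0"
    using ephemeralD[OF eph eps pers_hom_map_in[OF hom x]] pers_hom_zero[OF hom] by simp
  finally show "F1 (shift_down s eps) s x = 0"
    by (rule inj_onD[OF inj _ pers_module_map_in[OF V1 le x] pers_module_zero[OF V1]])
qed

lemma ephemeral_if_surj_hom:
  assumes hom: "pers_hom sb V F sc V2 F2 \<psi>"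
    and surj: "\<And>s. \<psi> s ` V s = V2 s"
    and eph: "ephemeral V F"
  shows "ephemeral V2 F2"
proof (rule ephemeralI)
  fix s eps y
  assume eps: "eps > 0" and "y \<in> V2 (shift_down s eps)"
  then obtain x where x: "x \<in> V (shift_down s eps)" and y: "y = \<psi> (shift_down s eps) x"
    using surj by blast
  have le: "cw_le (shift_down s eps) s" using eps by (simp add: cw_le_shift_down)
  show "F2 (shift_down s eps) s y = 0"
    using pers_hom_natural[OF hom le x] ephemeralD[OF eph eps x] pers_hom_zero[OF hom] y
    by simp
qed

lemma ephemeral_extension:
  assumes \<phi>: "pers_hom sa V1 F1 sb V F \<phi>" and \<psi>: "pers_hom sb V F sc V2 F2 \<psi>"
    and exact: "\<And>s. {x \<in> V s. \<psi> s x = 0} \<subseteq> \<phi> s ` V1 s"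
    and eph1: "ephemeral V1 F1" and eph2: "ephemeral V2 F2"
  shows "ephemeral V F"
proof (rule ephemeralI)
  fix s eps x
  assume eps: "eps > 0" and x: "x \<in> V (shift_down s eps)"
  have V: "pers_module sb V F" using \<phi> unfolding pers_hom_def by blast
  define m where "m = shift_down s (eps/2)"
  have split: "shift_down s eps = shift_down m (eps/2)"
    unfolding m_def shift_down_shift_down by simp
  have le1: "cw_le (shift_down s eps) m" and le2: "cw_le m s"
    using eps by (simp_all add: split m_def cw_le_shift_down)
  have x_mid: "F (shift_down s eps) m x \<in> V m"
    using pers_module_map_in[OF V le1 x] .
  have "\<psi> m (F (shift_down s eps) m x) = F2 (shift_down m (eps/2)) m (\<psi> (shift_down s eps) x)"
    using pers_hom_natural[OF \<psi> le1 x] by (simp add: split)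
  also have "\<dots> = 0"
    using ephemeralD[OF eph2, of "eps/2"] pers_hom_map_in[OF \<psi> x] eps by (simp add: split)
  finally obtain y where y: "y \<in> V1 m" and xy: "F (shift_down s eps) m x = \<phi> m y"
    using exact[of m] x_mid by blast
  have "F (shift_down s eps) s x = F m s (\<phi> m y)"
    using pers_module_comp[OF V le1 le2 x] xy by simp
  also have "\<dots> = \<phi> s (F1 m s y)"
    using pers_hom_natural[OF \<phi> le2 y] by simp
  also have "F1 m s y = 0"
    using ephemeralD[OF eph1, of "eps/2"] y eps by (simp add: m_def)
  finally show "F (shift_down s eps) s x = 0"
    using pers_hom_zero[OF \<phi>] by simp
qed

theorem lemma2p5:
  fixes sa :: "'k::field \<Rightarrow> 'a::ab_group_add \<Rightarrow> 'a"
    and sb :: "'k \<Rightarrow> 'b::ab_group_add \<Rightarrow> 'b"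
    and sc :: "'k \<Rightarrow> 'c::ab_group_add \<Rightarrow> 'c"
    and V1 :: "real^'n \<Rightarrow> 'a set" and F1 :: "real^'n \<Rightarrow> real^'n \<Rightarrow> 'a \<Rightarrow> 'a"
    and V :: "real^'n \<Rightarrow> 'b set" and F :: "real^'n \<Rightarrow> real^'n \<Rightarrow> 'b \<Rightarrow> 'b"
    and V2 :: "real^'n \<Rightarrow> 'c set" and F2 :: "real^'n \<Rightarrow> real^'n \<Rightarrow> 'c \<Rightarrow> 'c"
    and \<phi> :: "real^'n \<Rightarrow> 'a \<Rightarrow> 'b" and \<psi> :: "real^'n \<Rightarrow> 'b \<Rightarrow> 'c"
  assumes "short_exact sa V1 F1 sb V F sc V2 F2 \<phi> \<psi>"
  shows "ephemeral V F \<longleftrightarrow> (ephemeral V1 F1 \<and> ephemeral V2 F2)"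
proof -
  have \<phi>: "pers_hom sa V1 F1 sb V F \<phi>" and \<psi>: "pers_hom sb V F sc V2 F2 \<psi>"
    and inj: "\<And>s. inj_on (\<phi> s) (V1 s)"
    and exact: "\<And>s. \<phi> s ` V1 s = {x \<in> V s. \<psi> s x = 0}"
    and surj: "\<And>s. \<psi> s ` V s = V2 s"
    using assms unfolding short_exact_def by blast+
  show ?thesis
    using ephemeral_if_inj_hom[OF \<phi> inj] ephemeral_if_surj_hom[OF \<psi> surj]
      ephemeral_extension[OF \<phi> \<psi> equalityD2[OF exact]]
    by blast
qed

end
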